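(* Let $n=2$ and let $t\mapsto (q(t),p(t))$ be a solution of $\dot q_i=\partial H/\partial p_i$, $\dot p_i=-\partial H/\partial q_i$, $H=\frac12\sum_{i,j=1}^2p_ip_je^{-|q_i-q_j|}$, with $q_1(0)>q_2(0)$, normalized so that $p_1^2+p_2^2+2p_1p_2e^{-|q_1-q_2|}=1$. If $|p_1+p_2|<1$ and $p_1-p_2<0$ at $t=0$, then $q_1(t)-q_2(t)\to0$ in finite time (the trajectory reaches the singular set $\{q_1=q_2\}$ in finite time). If $|p_1+p_2|=1$ and $p_1-p_2<0$ at $t=0$, then $q_1(t)-q_2(t)\to0$ as $t\to\infty$ (the singular set is approached only asymptotically).
   Context: The quantity $p_1+p_2$ is constant along solutions. *)

theory Defs
  imports "HOL-Analysis.Analysis"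
begin

text \<open>Positions and momenta are functions on the index set {1,2} (values at
other indices are irrelevant). The Hamiltonian for n = 2.\<close>

definition H :: "(nat \<Rightarrow> real) \<Rightarrow> (nat \<Rightarrow> real) \<Rightarrow> real" where
  "H q p = 1/2 * (\<Sum>i\<in>{1,2::nat}. \<Sum>j\<in>{1,2::nat}. p i * p j * exp (- \<bar>q i - q j\<bar>))"

definition hamilton_solution ::
  "real set \<Rightarrow> (real \<Rightarrow> nat \<Rightarrow> real) \<Rightarrow> (real \<Rightarrow> nat \<Rightarrow> real) \<Rightarrow> bool" where
  "hamilton_solution I q p \<longleftrightarrow>
     (\<forall>t\<in>I. \<forall>i\<in>{1,2::nat}. \<exists>a b.
        ((\<lambda>x. H (q t) ((p t)(i := x))) has_real_derivative a) (at (p t i)) \<and>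
        ((\<lambda>x. H ((q t)(i := x)) (p t)) has_real_derivative b) (at (q t i)) \<and>
        ((\<lambda>s. q s i) has_real_derivative a) (at t within I) \<and>
        ((\<lambda>s. p s i) has_real_derivative (- b)) (at t within I))"

definition fwd :: "ereal \<Rightarrow> real set" where
  "fwd b = {t. 0 \<le> t \<and> ereal t < b}"

definition regular_solution ::
  "ereal \<Rightarrow> (real \<Rightarrow> nat \<Rightarrow> real) \<Rightarrow> (real \<Rightarrow> nat \<Rightarrow> real) \<Rightarrow> bool" where
  "regular_solution b q p \<longleftrightarrow>
     hamilton_solution (fwd b) q p \<and> (\<forall>t\<in>fwd b. q t 1 > q t 2)"

definition maximal_solution ::
  "ereal \<Rightarrow> (real \<Rightarrow> nat \<Rightarrow> real) \<Rightarrow> (real \<Rightarrow> nat \<Rightarrow> real) \<Rightarrow> bool" where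
  "maximal_solution b q p \<longleftrightarrow>
     regular_solution b q p \<and>
     (\<forall>b' q' p'. regular_solution b' q' p' \<and>
        (\<forall>i\<in>{1,2::nat}. q' 0 i = q 0 i \<and> p' 0 i = p 0 i) \<longrightarrow> b' \<le> b)"

end

theory Submission
  imports Defs
begin

text \<open>
  The total momentum P = p_1 + p_2 is conserved. In the variables m = p_1 - p_2 and
  x = q_1 - q_2 the equations become m' = (P^2 - m^2) e^{-x} / 2 and x' = m (1 - e^{-x}),
  and on the energy level H = 1/2 they satisfy (m^2 - P^2) (1 - e^{-x}) = 2 - 2 P^2.

  If |P| = 1 this forces m = -1, so x' = e^{-x} - 1 and e^x - 1 decays like e^{-t}.
  If |P| < 1 the energy level turns the equation for m into the Riccati equation
  m' = (a^2 - m^2) / 2 with a^2 = 2 - P^2, and determines x as a function of m. Since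
  m(0) < -a, the solution m = a (1 + R) / (1 - R), R = K e^{-a t} with K > 1, tends to minus
  infinity as t approaches T = ln K / a, and then x tends to 0.

  In both cases the explicit solution, lifted back to (q, p), is a regular solution with the
  same initial data, so by maximality b is at least its lifespan. Uniqueness for the reduced
  equations shows that the maximal solution coincides with it; this gives the limit of the gap
  and, for |P| < 1, that b is not larger than the blow-up time.
\<close>

section \<open>Hamilton's equations for two peakons\<close>

lemma H_eq: "H q p = ((p 1)\<^sup>2 + (p 2)\<^sup>2 + 2 * p 1 * p 2 * exp (- \<bar>q 1 - q 2\<bar>)) / 2"
  unfolding H_def by (simp add: abs_minus_commute power2_eq_square algebra_simps)

lemma H_sum_diff:
  "4 * H q p = (p 1 + p 2)\<^sup>2 + (p 1 - p 2)\<^sup>2 + ((p 1 + p 2)\<^sup>2 - (p 1 - p 2)\<^sup>2) * exp (- \<bar>q 1 - q 2\<bar>)"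
  unfolding H_eq by (simp add: power2_eq_square algebra_simps)

lemma H_deriv_p1:
  "((\<lambda>y. H q (p(1 := y))) has_real_derivative p 1 + p 2 * exp (- \<bar>q 1 - q 2\<bar>)) (at (p 1))"
  unfolding H_eq by (auto intro!: derivative_eq_intros simp: algebra_simps)

lemma H_deriv_p2:
  "((\<lambda>y. H q (p(2 := y))) has_real_derivative p 2 + p 1 * exp (- \<bar>q 1 - q 2\<bar>)) (at (p 2))"
  unfolding H_eq by (auto intro!: derivative_eq_intros simp: algebra_simps)

lemma H_deriv_q1:
  assumes "q 2 < q 1"
  shows "((\<lambda>y. H (q(1 := y)) p) has_real_derivative - (p 1 * p 2 * exp (- (q 1 - q 2)))) (at (q 1))"
proof (rule has_field_derivative_transform_within_open[where S = "{q 2<..}"])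
  show "((\<lambda>y. ((p 1)\<^sup>2 + (p 2)\<^sup>2 + 2 * p 1 * p 2 * exp (- (y - q 2))) / 2)
      has_real_derivative - (p 1 * p 2 * exp (- (q 1 - q 2)))) (at (q 1))"
    by (auto intro!: derivative_eq_intros simp: algebra_simps)
qed (use assms in \<open>auto simp: H_eq\<close>)

lemma H_deriv_q2:
  assumes "q 2 < q 1"
  shows "((\<lambda>y. H (q(2 := y)) p) has_real_derivative p 1 * p 2 * exp (- (q 1 - q 2))) (at (q 2))"
proof (rule has_field_derivative_transform_within_open[where S = "{..<q 1}"])
  show "((\<lambda>y. ((p 1)\<^sup>2 + (p 2)\<^sup>2 + 2 * p 1 * p 2 * exp (- (q 1 - y))) / 2)
      has_real_derivative p 1 * p 2 * exp (- (q 1 - q 2))) (at (q 2))"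
    by (auto intro!: derivative_eq_intros simp: algebra_simps)
qed (use assms in \<open>auto simp: H_eq\<close>)

lemma DERIV_pair_ex_iff:
  assumes "(f has_real_derivative a\<^sub>0) (at x)" and "(g has_real_derivative b\<^sub>0) (at y)"
  shows "(\<exists>a b. (f has_real_derivative a) (at x) \<and> (g has_real_derivative b) (at y) \<and>
      (u has_real_derivative a) F \<and> (v has_real_derivative - b) F)
    \<longleftrightarrow> (u has_real_derivative a\<^sub>0) F \<and> (v has_real_derivative - b\<^sub>0) F"
  using assms DERIV_unique by blast

lemma hamilton_solution_iff:
  assumes "\<And>t. t \<in> I \<Longrightarrow> q t 2 < q t 1"
  shows "hamilton_solution I q p \<longleftrightarrow> (\<forall>t\<in>I.
    ((\<lambda>s. q s 1) has_real_derivative p t 1 + p t 2 * exp (- (q t 1 - q t 2))) (at t within I) \<and>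
    ((\<lambda>s. q s 2) has_real_derivative p t 2 + p t 1 * exp (- (q t 1 - q t 2))) (at t within I) \<and>
    ((\<lambda>s. p s 1) has_real_derivative p t 1 * p t 2 * exp (- (q t 1 - q t 2))) (at t within I) \<and>
    ((\<lambda>s. p s 2) has_real_derivative - (p t 1 * p t 2 * exp (- (q t 1 - q t 2)))) (at t within I))"
  unfolding hamilton_solution_def
proof (intro ball_cong refl, goal_cases)
  case (1 t)
  then have gap: "q t 2 < q t 1"
    using assms by blast
  then have "\<bar>q t 1 - q t 2\<bar> = q t 1 - q t 2"
    by simp
  then show ?case
    by (simp only: ball_simps DERIV_pair_ex_iff[OF H_deriv_p1 H_deriv_q1[OF gap]]
        DERIV_pair_ex_iff[OF H_deriv_p2 H_deriv_q2[OF gap]]) auto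
qed

section \<open>Solutions and their conservation laws\<close>

lemma fwd_ereal: "fwd (ereal T) = {0..<T}"
  by (auto simp: fwd_def)

lemma fwd_infinity: "fwd \<infinity> = {0..}"
  by (auto simp: fwd_def)

lemma zero_in_fwd: "t \<in> fwd b \<Longrightarrow> 0 \<in> fwd b"
  by (auto simp: fwd_def intro: le_less_trans[of _ "ereal t" b])

lemma convex_fwd: "convex (fwd b)"
  by (rule is_interval_convex)
    (auto simp: is_interval_1 fwd_def intro: le_less_trans[of _ "ereal _" b])

lemma fwd_deriv_zero_imp_eq:
  assumes "\<And>s. s \<in> fwd b \<Longrightarrow> (f has_real_derivative 0) (at s within fwd b)" and "t \<in> fwd b"
  shows "f t = f 0"
  using has_field_derivative_zero_constant[OF convex_fwd assms(1)] assms(2) zero_in_fwd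
  by metis

lemma regular_solution_gap_pos:
  "regular_solution b q p \<Longrightarrow> t \<in> fwd b \<Longrightarrow> q t 2 < q t 1"
  by (simp add: regular_solution_def)

lemma regular_solution_derivs:
  assumes "regular_solution b q p" and "t \<in> fwd b"
  shows "((\<lambda>s. q s 1) has_real_derivative p t 1 + p t 2 * exp (- (q t 1 - q t 2))) (at t within fwd b)"
    and "((\<lambda>s. q s 2) has_real_derivative p t 2 + p t 1 * exp (- (q t 1 - q t 2))) (at t within fwd b)"
    and "((\<lambda>s. p s 1) has_real_derivative p t 1 * p t 2 * exp (- (q t 1 - q t 2))) (at t within fwd b)"
    and "((\<lambda>s. p s 2) has_real_derivative - (p t 1 * p t 2 * exp (- (q t 1 - q t 2)))) (at t within fwd b)"
  using assms hamilton_solution_iff[of "fwd b" q p] unfolding regular_solution_def by auto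

lemma regular_solution_momentum:
  assumes "regular_solution b q p" and "t \<in> fwd b"
  shows "p t 1 + p t 2 = p 0 1 + p 0 2"
proof (rule fwd_deriv_zero_imp_eq[where f = "\<lambda>s. p s 1 + p s 2", OF _ assms(2)])
  fix s assume "s \<in> fwd b"
  from regular_solution_derivs[OF assms(1) this]
  show "((\<lambda>s. p s 1 + p s 2) has_real_derivative 0) (at s within fwd b)"
    by (auto intro!: derivative_eq_intros)
qed

lemma regular_solution_energy:
  assumes sol: "regular_solution b q p" and t: "t \<in> fwd b"
  shows "H (q t) (p t) = H (q 0) (p 0)"
proof -
  define E where "E s = (p s 1)\<^sup>2 + (p s 2)\<^sup>2 + 2 * p s 1 * p s 2 * exp (- (q s 1 - q s 2))" for s
  have H_E: "H (q s) (p s) = E s / 2" if "s \<in> fwd b" for s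
    using regular_solution_gap_pos[OF sol that] by (simp add: H_eq E_def)
  have "E t = E 0"
  proof (rule fwd_deriv_zero_imp_eq[OF _ t])
    fix s assume "s \<in> fwd b"
    from regular_solution_derivs[OF sol this]
    show "(E has_real_derivative 0) (at s within fwd b)"
      unfolding E_def by (auto intro!: derivative_eq_intros simp: algebra_simps power2_eq_square)
  qed
  then show ?thesis
    using H_E[OF t] H_E[OF zero_in_fwd[OF t]] by simp
qed

lemma regular_solution_reduced:
  assumes "regular_solution b q p" and "t \<in> fwd b"
  shows "((\<lambda>s. p s 1 - p s 2) has_real_derivative
      ((p 0 1 + p 0 2)\<^sup>2 - (p t 1 - p t 2)\<^sup>2) * exp (- (q t 1 - q t 2)) / 2) (at t within fwd b)"
    and "((\<lambda>s. q s 1 - q s 2) has_real_derivative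
      (p t 1 - p t 2) * (1 - exp (- (q t 1 - q t 2)))) (at t within fwd b)"
  using regular_solution_derivs[OF assms] regular_solution_momentum[OF assms, symmetric]
  by (auto intro!: derivative_eq_intros simp: algebra_simps power2_eq_square)

lemma regular_solution_energy_level:
  assumes sol: "regular_solution b q p" and t: "t \<in> fwd b" and energy: "H (q 0) (p 0) = 1 / 2"
  shows "(p 0 1 + p 0 2)\<^sup>2 + (p t 1 - p t 2)\<^sup>2
      + ((p 0 1 + p 0 2)\<^sup>2 - (p t 1 - p t 2)\<^sup>2) * exp (- (q t 1 - q t 2)) = 2"
proof -
  have "\<bar>q t 1 - q t 2\<bar> = q t 1 - q t 2"
    using regular_solution_gap_pos[OF sol t] by simp
  then show ?thesis
    using H_sum_diff[of "q t" "p t"] regular_solution_energy[OF sol t]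
      regular_solution_momentum[OF sol t] energy
    by simp
qed

definition sum_diff_coords :: "(real \<Rightarrow> real) \<Rightarrow> (real \<Rightarrow> real) \<Rightarrow> real \<Rightarrow> nat \<Rightarrow> real" where
  "sum_diff_coords S D t i = (if i = 1 then (S t + D t) / 2 else (S t - D t) / 2)"

lemma regular_solution_sum_diff_coords:
  assumes pos: "\<And>t. t \<in> fwd b \<Longrightarrow> 0 < x t"
    and dS: "\<And>t. t \<in> fwd b \<Longrightarrow> (S has_real_derivative P * (1 + exp (- x t))) (at t within fwd b)"
    and dx: "\<And>t. t \<in> fwd b \<Longrightarrow> (x has_real_derivative m t * (1 - exp (- x t))) (at t within fwd b)"
    and dm: "\<And>t. t \<in> fwd b \<Longrightarrow>
      (m has_real_derivative (P\<^sup>2 - (m t)\<^sup>2) * exp (- x t) / 2) (at t within fwd b)"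
  shows "regular_solution b (sum_diff_coords S x) (sum_diff_coords (\<lambda>_. P) m)"
proof -
  have gap: "sum_diff_coords S x t 2 < sum_diff_coords S x t 1" if "t \<in> fwd b" for t
    using pos[OF that] by (simp add: sum_diff_coords_def)
  have "hamilton_solution (fwd b) (sum_diff_coords S x) (sum_diff_coords (\<lambda>_. P) m)"
    by (rule hamilton_solution_iff[THEN iffD2])
      (use gap in \<open>auto intro!: derivative_eq_intros dS dx dm
        simp: sum_diff_coords_def field_simps power2_eq_square\<close>)
  with gap show ?thesis
    unfolding regular_solution_def by blast
qed

lemma maximal_solution_bound:
  assumes "maximal_solution b q p"
    and "regular_solution b' (sum_diff_coords S x) (sum_diff_coords (\<lambda>_. P) m)"
    and "S 0 = q 0 1 + q 0 2" "x 0 = q 0 1 - q 0 2" "P = p 0 1 + p 0 2" "m 0 = p 0 1 - p 0 2"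
  shows "b' \<le> b"
proof -
  have "\<forall>i\<in>{1,2}. sum_diff_coords S x 0 i = q 0 i \<and> sum_diff_coords (\<lambda>_. P) m 0 i = p 0 i"
    using assms(3-6) by (auto simp: sum_diff_coords_def)
  with assms(1,2) show ?thesis
    unfolding maximal_solution_def by blast
qed

section \<open>Total momentum of modulus one\<close>

lemma relaxation_explicit:
  assumes dx: "\<And>s. s \<in> fwd b \<Longrightarrow> (x has_real_derivative - (1 - exp (- x s))) (at s within fwd b)"
    and t: "t \<in> fwd b"
  shows "x t = ln (1 + (exp (x 0) - 1) * exp (- t))"
proof -
  have "(exp (x t) - 1) * exp t = (exp (x 0) - 1) * exp 0"
    by (rule fwd_deriv_zero_imp_eq[where f = "\<lambda>s. (exp (x s) - 1) * exp s", OF _ t])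
      (auto intro!: derivative_eq_intros dx simp: exp_minus field_simps)
  then have "exp (x t) = 1 + (exp (x 0) - 1) * exp (- t)"
    by (simp add: exp_minus field_simps)
  then show ?thesis
    by (metis ln_exp)
qed

lemma unit_energy_level:
  fixes P m x :: real
  assumes "P\<^sup>2 = 1" and "0 < x" and "P\<^sup>2 + m\<^sup>2 + (P\<^sup>2 - m\<^sup>2) * exp (- x) = 2"
  shows "m\<^sup>2 = 1"
proof -
  have "(m\<^sup>2 - 1) * (1 - exp (- x)) = 0"
    using assms(1,3) by (simp add: algebra_simps)
  moreover have "exp (- x) < 1"
    using assms(2) by simp
  ultimately show ?thesis
    by simp
qed

lemma unit_momentum_solution:
  assumes P: "P\<^sup>2 = 1" and C: "0 < C"
  shows "regular_solution \<infinity>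
    (sum_diff_coords (\<lambda>t. S\<^sub>0 + P * (t + ln (exp t + C) - ln (1 + C))) (\<lambda>t. ln (1 + C * exp (- t))))
    (sum_diff_coords (\<lambda>_. P) (\<lambda>_. -1))"
proof (rule regular_solution_sum_diff_coords)
  fix t
  have pos: "0 < 1 + C * exp (- t)"
    using C by (simp add: add_pos_pos)
  have exp_gap: "exp (- ln (1 + C * exp (- t))) = 1 / (1 + C * exp (- t))"
    using pos by (simp add: exp_minus inverse_eq_divide)
  show "0 < ln (1 + C * exp (- t))"
    using C by (intro ln_gt_zero) simp
  show "((\<lambda>t. S\<^sub>0 + P * (t + ln (exp t + C) - ln (1 + C))) has_real_derivative
      P * (1 + exp (- ln (1 + C * exp (- t))))) (at t within fwd \<infinity>)"
    unfolding exp_gap using C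
    by (auto intro!: derivative_eq_intros simp: field_simps add_pos_nonneg exp_minus)
  show "((\<lambda>t. ln (1 + C * exp (- t))) has_real_derivative
      - 1 * (1 - exp (- ln (1 + C * exp (- t))))) (at t within fwd \<infinity>)"
    unfolding exp_gap using C pos
    by (auto intro!: derivative_eq_intros simp: field_simps)
  show "((\<lambda>_. - 1) has_real_derivative
      (P\<^sup>2 - (- 1)\<^sup>2) * exp (- ln (1 + C * exp (- t))) / 2) (at t within fwd \<infinity>)"
    using P by (auto intro!: derivative_eq_intros)
qed

lemma regular_solution_unit_momentum:
  assumes sol: "regular_solution b q p" and energy: "H (q 0) (p 0) = 1 / 2"
    and P: "(p 0 1 + p 0 2)\<^sup>2 = 1" and t: "t \<in> fwd b"
  shows "p t 1 - p t 2 = p 0 1 - p 0 2"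
proof (rule fwd_deriv_zero_imp_eq[where f = "\<lambda>s. p s 1 - p s 2", OF _ t])
  fix s assume s: "s \<in> fwd b"
  have "(p s 1 - p s 2)\<^sup>2 = 1"
    by (rule unit_energy_level[OF P _ regular_solution_energy_level[OF sol s energy]])
      (use regular_solution_gap_pos[OF sol s] in simp)
  then show "((\<lambda>s. p s 1 - p s 2) has_real_derivative 0) (at s within fwd b)"
    using regular_solution_reduced(1)[OF sol s] P by simp
qed

lemma collision_at_infinity:
  assumes sol: "maximal_solution b q p" and init: "q 0 2 < q 0 1" and energy: "H (q 0) (p 0) = 1 / 2"
    and P: "\<bar>p 0 1 + p 0 2\<bar> = 1" and m: "p 0 1 - p 0 2 < 0"
  shows "b = \<infinity> \<and> ((\<lambda>t. q t 1 - q t 2) \<longlongrightarrow> 0) at_top"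
proof -
  have reg: "regular_solution b q p"
    using sol by (simp add: maximal_solution_def)
  define C where "C = exp (q 0 1 - q 0 2) - 1"
  have C: "0 < C"
    using init by (simp add: C_def)
  have P2: "(p 0 1 + p 0 2)\<^sup>2 = 1"
    using P by (simp add: abs_square_eq_1)
  have "(p 0 1 - p 0 2)\<^sup>2 = 1"
    using unit_energy_level[OF P2, of "q 0 1 - q 0 2"] H_sum_diff[of "q 0" "p 0"] energy init
    by simp
  with m have m0: "p 0 1 - p 0 2 = -1"
    by (auto simp: power2_eq_1_iff)
  have "\<infinity> \<le> b"
    by (rule maximal_solution_bound[OF sol unit_momentum_solution[OF P2 C]])
      (use m0 in \<open>simp_all add: C_def\<close>)
  then have b: "b = \<infinity>"
    by simp
  have m_const: "p t 1 - p t 2 = -1" if "t \<in> fwd b" for t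
    using regular_solution_unit_momentum[OF reg energy P2 that] m0 by simp
  have gap: "q t 1 - q t 2 = ln (1 + C * exp (- t))" if "t \<in> fwd b" for t
    unfolding C_def
    by (rule relaxation_explicit[where x = "\<lambda>s. q s 1 - q s 2", OF _ that])
      (use regular_solution_reduced(2)[OF reg] m_const in simp)
  have "((\<lambda>t. ln (1 + C * exp (- t))) \<longlongrightarrow> ln (1 + C * 0)) at_top"
    by (intro tendsto_intros filterlim_compose[OF exp_at_bot filterlim_uminus_at_bot_at_top]) simp
  moreover have "eventually (\<lambda>t. ln (1 + C * exp (- t)) = q t 1 - q t 2) at_top"
    using eventually_ge_at_top[of 0] by eventually_elim (use gap in \<open>simp add: b fwd_infinity\<close>)
  ultimately show ?thesis
    using b by (simp add: tendsto_cong)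
qed

section \<open>Total momentum of modulus less than one\<close>

text \<open>On the energy level H = 1/2 the gap q_1 - q_2 is this function of m = p_1 - p_2,
  where P = p_1 + p_2 and a^2 = 2 - P^2.\<close>

definition gap_of_momentum :: "real \<Rightarrow> real \<Rightarrow> real \<Rightarrow> real" where
  "gap_of_momentum P a m = ln (m\<^sup>2 - P\<^sup>2) - ln (m\<^sup>2 - a\<^sup>2)"

lemma energy_level_gap:
  fixes P m x a :: real
  assumes level: "P\<^sup>2 + m\<^sup>2 + (P\<^sup>2 - m\<^sup>2) * exp (- x) = 2" and x: "0 < x"
    and P: "P\<^sup>2 < 1" and a: "a\<^sup>2 = 2 - P\<^sup>2"
  shows "a\<^sup>2 < m\<^sup>2" and "x = gap_of_momentum P a m"
    and "(P\<^sup>2 - m\<^sup>2) * exp (- x) = a\<^sup>2 - m\<^sup>2"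
proof -
  show decay: "(P\<^sup>2 - m\<^sup>2) * exp (- x) = a\<^sup>2 - m\<^sup>2"
    using level a by (simp add: algebra_simps)
  have "(m\<^sup>2 - P\<^sup>2) * (1 - exp (- x)) = 2 - 2 * P\<^sup>2"
    using level by (simp add: algebra_simps)
  moreover have "0 < 1 - exp (- x)" and "0 < 2 - 2 * P\<^sup>2"
    using x P by simp_all
  ultimately have mP: "0 < m\<^sup>2 - P\<^sup>2"
    by (metis zero_less_mult_pos2)
  then have "0 < (m\<^sup>2 - P\<^sup>2) * exp (- x)"
    by simp
  moreover have "(m\<^sup>2 - P\<^sup>2) * exp (- x) = m\<^sup>2 - a\<^sup>2"
    using decay by (simp add: algebra_simps)
  ultimately show gt: "a\<^sup>2 < m\<^sup>2"
    by simp
  have "exp x * (m\<^sup>2 - a\<^sup>2) = m\<^sup>2 - P\<^sup>2"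
    using decay by (simp add: exp_minus field_simps)
  then have "exp x = (m\<^sup>2 - P\<^sup>2) / (m\<^sup>2 - a\<^sup>2)"
    using gt by (simp add: field_simps)
  then have "x = ln ((m\<^sup>2 - P\<^sup>2) / (m\<^sup>2 - a\<^sup>2))"
    by (metis ln_exp)
  then show "x = gap_of_momentum P a m"
    using gt mP by (simp add: gap_of_momentum_def ln_div)
qed

lemma cayley_sq_diff:
  fixes a R :: real
  assumes "R \<noteq> 1"
  shows "(a * (1 + R) / (1 - R))\<^sup>2 - a\<^sup>2 = 4 * a\<^sup>2 * R / (1 - R)\<^sup>2"
proof -
  have "(1 - R)\<^sup>2 \<noteq> 0"
    using assms by simp
  then show ?thesis
    by (simp add: power_divide field_simps) (simp add: power2_eq_square algebra_simps)
qed

lemma cayley_inverse: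
  fixes a m R :: real
  assumes "m + a \<noteq> 0" and "a \<noteq> 0" and "(m - a) / (m + a) = R"
  shows "R \<noteq> 1" and "a * (1 + R) / (1 - R) = m"
proof -
  have R: "m - a = R * (m + a)"
    using assms(1,3) by (simp add: field_simps)
  show "R \<noteq> 1"
    using R assms(2) by auto
  then show "a * (1 + R) / (1 - R) = m"
    using R by (simp add: field_simps)
qed

lemma cayley_deriv:
  fixes a R :: real
  assumes "R \<noteq> 1"
  shows "((\<lambda>R. a * (1 + R) / (1 - R)) has_real_derivative 2 * a / (1 - R)\<^sup>2) (at R)"
  using assms by (auto intro!: derivative_eq_intros simp: field_simps power2_eq_square)

lemma cayley_energy:
  fixes a P R :: real
  assumes R: "0 < R" "R \<noteq> 1" and Pa: "P\<^sup>2 < a\<^sup>2"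
  defines "m \<equiv> a * (1 + R) / (1 - R)"
  shows "(m\<^sup>2 - a\<^sup>2) / (m\<^sup>2 - P\<^sup>2) = 4 * a\<^sup>2 * R / (4 * a\<^sup>2 * R + (a\<^sup>2 - P\<^sup>2) * (1 - R)\<^sup>2)"
    and "gap_of_momentum P a m = ln (1 + (a\<^sup>2 - P\<^sup>2) * (1 - R)\<^sup>2 / (4 * a\<^sup>2 * R))"
proof -
  have nz: "(1 - R)\<^sup>2 \<noteq> 0"
    using R by simp
  have "0 < a\<^sup>2"
    using Pa by (metis zero_le_power2 le_less_trans)
  define V where "V = 4 * a\<^sup>2 * R / (1 - R)\<^sup>2"
  have V: "0 < V"
    using R \<open>0 < a\<^sup>2\<close> nz by (simp add: V_def)
  have mV: "m\<^sup>2 - a\<^sup>2 = V" "m\<^sup>2 - P\<^sup>2 = V + (a\<^sup>2 - P\<^sup>2)"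
    using cayley_sq_diff[OF R(2), of a] by (simp_all add: m_def V_def)
  show "(m\<^sup>2 - a\<^sup>2) / (m\<^sup>2 - P\<^sup>2) = 4 * a\<^sup>2 * R / (4 * a\<^sup>2 * R + (a\<^sup>2 - P\<^sup>2) * (1 - R)\<^sup>2)"
    using nz V Pa unfolding mV by (simp add: V_def field_simps)
  have "(a\<^sup>2 - P\<^sup>2) * (1 - R)\<^sup>2 / (4 * a\<^sup>2 * R) = (a\<^sup>2 - P\<^sup>2) / V"
    using nz by (simp add: V_def)
  then have "1 + (a\<^sup>2 - P\<^sup>2) * (1 - R)\<^sup>2 / (4 * a\<^sup>2 * R) = (V + (a\<^sup>2 - P\<^sup>2)) / V"
    using V by (simp add: field_simps)
  then show "gap_of_momentum P a m = ln (1 + (a\<^sup>2 - P\<^sup>2) * (1 - R)\<^sup>2 / (4 * a\<^sup>2 * R))"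
    using V Pa unfolding gap_of_momentum_def mV by (simp add: ln_div)
qed

text \<open>The solution of m' = (a^2 - m^2) / 2 with (m - a) / (m + a) = K e^{-a t}; where
  K e^{-a t} = 1 its value is junk (division by zero).\<close>

definition riccati_sol :: "real \<Rightarrow> real \<Rightarrow> real \<Rightarrow> real" where
  "riccati_sol a K t = a * (1 + K * exp (- a * t)) / (1 - K * exp (- a * t))"

lemma riccati_sol_sq_diff:
  assumes "K * exp (- a * t) \<noteq> 1"
  shows "(riccati_sol a K t)\<^sup>2 - a\<^sup>2 = 4 * a\<^sup>2 * (K * exp (- a * t)) / (1 - K * exp (- a * t))\<^sup>2"
  unfolding riccati_sol_def using assms by (rule cayley_sq_diff)

lemma riccati_sol_deriv:
  assumes "K * exp (- a * t) \<noteq> 1"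
  shows "(riccati_sol a K has_real_derivative (a\<^sup>2 - (riccati_sol a K t)\<^sup>2) / 2) (at t)"
proof -
  define R where "R = K * exp (- a * t)"
  have R: "R \<noteq> 1"
    using assms by (simp add: R_def)
  have "((\<lambda>t. K * exp (- a * t)) has_real_derivative - a * R) (at t)"
    unfolding R_def by (auto intro!: derivative_eq_intros)
  from DERIV_chain2[OF cayley_deriv[of _ a, OF R[unfolded R_def]] this[unfolded R_def]]
  have "(riccati_sol a K has_real_derivative 2 * a / (1 - R)\<^sup>2 * (- a * R)) (at t)"
    by (simp only: riccati_sol_def[abs_def] R_def)
  also have "2 * a / (1 - R)\<^sup>2 * (- a * R) = - (4 * a\<^sup>2 * R / (1 - R)\<^sup>2) / 2"
    by (simp add: power2_eq_square)
  also have "\<dots> = (a\<^sup>2 - (riccati_sol a K t)\<^sup>2) / 2"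
    by (simp add: riccati_sol_sq_diff[OF assms, folded R_def, symmetric])
  finally show ?thesis .
qed

lemma riccati_sol_eqI:
  assumes "m + a \<noteq> 0" and "a \<noteq> 0" and "(m - a) / (m + a) = K * exp (- a * t)"
  shows "K * exp (- a * t) \<noteq> 1" and "riccati_sol a K t = m"
  unfolding riccati_sol_def using cayley_inverse[OF assms] by simp_all

lemma riccati_sol_initial:
  assumes "0 < a" and "a\<^sup>2 < m\<^sup>2" and "m < 0"
  shows "1 < (m - a) / (m + a)" and "riccati_sol a ((m - a) / (m + a)) 0 = m"
proof -
  have "a\<^sup>2 < (- m)\<^sup>2"
    using assms(2) by (simp only: power2_minus)
  then have "a < - m"
    by (rule power_less_imp_less_base) (use assms(3) in simp)
  then show "1 < (m - a) / (m + a)"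
    using assms(1) by (simp add: neg_less_divide_eq)
  have "m + a \<noteq> 0" and "a \<noteq> 0"
    using \<open>a < - m\<close> assms(1) by linarith+
  then show "riccati_sol a ((m - a) / (m + a)) 0 = m"
    by (rule riccati_sol_eqI(2)) simp
qed

lemma riccati_uniqueness:
  assumes dm: "\<And>s. s \<in> fwd b \<Longrightarrow> (m has_real_derivative (a\<^sup>2 - (m s)\<^sup>2) / 2) (at s within fwd b)"
    and nz: "\<And>s. s \<in> fwd b \<Longrightarrow> m s + a \<noteq> 0" and t: "t \<in> fwd b"
  shows "(m t - a) / (m t + a) = (m 0 - a) / (m 0 + a) * exp (- a * t)"
proof -
  have "(m t - a) / (m t + a) * exp (a * t) = (m 0 - a) / (m 0 + a) * exp (a * 0)"
  proof (rule fwd_deriv_zero_imp_eq[where f = "\<lambda>s. (m s - a) / (m s + a) * exp (a * s)", OF _ t])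
    fix s assume "s \<in> fwd b"
    with nz show "((\<lambda>s. (m s - a) / (m s + a) * exp (a * s)) has_real_derivative 0) (at s within fwd b)"
      by (auto intro!: derivative_eq_intros dm simp: field_simps power2_eq_square)
  qed
  then have "(m t - a) / (m t + a) * exp (a * t) * exp (- a * t) = (m 0 - a) / (m 0 + a) * exp (- a * t)"
    by simp
  then show ?thesis
    by (simp add: mult.assoc flip: exp_add)
qed

lemma riccati_ratio_gt_1:
  fixes a K t :: real
  assumes "0 < a" and "t < ln K / a" and "0 < K"
  shows "1 < K * exp (- a * t)"
proof -
  have "a * t < ln K"
    using pos_less_divide_eq[OF assms(1), of t "ln K"] assms(2) by (simp add: mult.commute)
  moreover have "K * exp (- a * t) = exp (ln K - a * t)"
    using assms(3) by (simp add: exp_diff exp_minus divide_inverse)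
  ultimately show ?thesis
    by simp
qed

lemma riccati_energy_solution:
  fixes P a :: real and S m :: "real \<Rightarrow> real"
  assumes Pa: "P\<^sup>2 < a\<^sup>2"
    and dm: "\<And>t. t \<in> fwd b \<Longrightarrow> (m has_real_derivative (a\<^sup>2 - (m t)\<^sup>2) / 2) (at t within fwd b)"
    and gt: "\<And>t. t \<in> fwd b \<Longrightarrow> a\<^sup>2 < (m t)\<^sup>2"
    and dS: "\<And>t. t \<in> fwd b \<Longrightarrow>
      (S has_real_derivative P * (1 + ((m t)\<^sup>2 - a\<^sup>2) / ((m t)\<^sup>2 - P\<^sup>2))) (at t within fwd b)"
  shows "regular_solution b (sum_diff_coords S (\<lambda>t. gap_of_momentum P a (m t))) (sum_diff_coords (\<lambda>_. P) m)"
  unfolding gap_of_momentum_def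
proof (rule regular_solution_sum_diff_coords)
  fix t assume t: "t \<in> fwd b"
  have pos: "0 < (m t)\<^sup>2 - a\<^sup>2" "0 < (m t)\<^sup>2 - P\<^sup>2"
    using gt[OF t] Pa by simp_all
  have exp_gap: "exp (- (ln ((m t)\<^sup>2 - P\<^sup>2) - ln ((m t)\<^sup>2 - a\<^sup>2))) = ((m t)\<^sup>2 - a\<^sup>2) / ((m t)\<^sup>2 - P\<^sup>2)"
    using pos by (simp add: exp_diff)
  show "0 < ln ((m t)\<^sup>2 - P\<^sup>2) - ln ((m t)\<^sup>2 - a\<^sup>2)"
    using pos Pa by simp
  show "(S has_real_derivative P * (1 + exp (- (ln ((m t)\<^sup>2 - P\<^sup>2) - ln ((m t)\<^sup>2 - a\<^sup>2)))))
      (at t within fwd b)"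
    unfolding exp_gap by (rule dS[OF t])
  have "((\<lambda>t. ln ((m t)\<^sup>2 - P\<^sup>2) - ln ((m t)\<^sup>2 - a\<^sup>2)) has_real_derivative
      2 * m t * ((a\<^sup>2 - (m t)\<^sup>2) / 2) / ((m t)\<^sup>2 - P\<^sup>2)
      - 2 * m t * ((a\<^sup>2 - (m t)\<^sup>2) / 2) / ((m t)\<^sup>2 - a\<^sup>2)) (at t within fwd b)"
    using pos by (auto intro!: derivative_eq_intros dm[OF t] simp: mult.commute)
  moreover have "2 * m t * ((a\<^sup>2 - (m t)\<^sup>2) / 2) / ((m t)\<^sup>2 - P\<^sup>2)
      - 2 * m t * ((a\<^sup>2 - (m t)\<^sup>2) / 2) / ((m t)\<^sup>2 - a\<^sup>2)
      = m t * (1 - ((m t)\<^sup>2 - a\<^sup>2) / ((m t)\<^sup>2 - P\<^sup>2))"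
  proof -
    define u v where "u = (m t)\<^sup>2 - P\<^sup>2" and "v = (m t)\<^sup>2 - a\<^sup>2"
    have neg: "a\<^sup>2 - (m t)\<^sup>2 = - v" and "u \<noteq> 0" "v \<noteq> 0"
      using pos by (simp_all add: u_def v_def)
    then show ?thesis
      unfolding neg u_def[symmetric] v_def[symmetric] by (simp add: field_simps)
  qed
  ultimately show "((\<lambda>t. ln ((m t)\<^sup>2 - P\<^sup>2) - ln ((m t)\<^sup>2 - a\<^sup>2)) has_real_derivative
      m t * (1 - exp (- (ln ((m t)\<^sup>2 - P\<^sup>2) - ln ((m t)\<^sup>2 - a\<^sup>2))))) (at t within fwd b)"
    unfolding exp_gap by simp
  have decay: "(P\<^sup>2 - (m t)\<^sup>2) * (((m t)\<^sup>2 - a\<^sup>2) / ((m t)\<^sup>2 - P\<^sup>2)) / 2 = (a\<^sup>2 - (m t)\<^sup>2) / 2"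
    using pos by (simp add: field_simps)
  show "(m has_real_derivative
      (P\<^sup>2 - (m t)\<^sup>2) * exp (- (ln ((m t)\<^sup>2 - P\<^sup>2) - ln ((m t)\<^sup>2 - a\<^sup>2))) / 2) (at t within fwd b)"
    unfolding exp_gap decay by (rule dm[OF t])
qed

lemma integral_has_real_derivative_fwd:
  assumes "continuous_on {0..T} g" and "t \<in> fwd (ereal T)"
  shows "((\<lambda>t. integral {0..t} g) has_real_derivative g t) (at t within fwd (ereal T))"
proof (rule has_field_derivative_subset)
  show "((\<lambda>t. integral {0..t} g) has_real_derivative g t) (at t within {0..T})"
    using assms by (intro integral_has_real_derivative) (auto simp: fwd_ereal)
qed (auto simp: fwd_ereal)

lemma riccati_regular_solution:
  assumes a: "0 < a" and Pa: "P\<^sup>2 < a\<^sup>2" and K: "1 < K"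
  obtains S where "S 0 = S\<^sub>0"
    and "regular_solution (ereal (ln K / a))
      (sum_diff_coords S (\<lambda>t. gap_of_momentum P a (riccati_sol a K t)))
      (sum_diff_coords (\<lambda>_. P) (riccati_sol a K))"
proof
  define T where "T = ln K / a"
  define R where "R t = K * exp (- a * t)" for t
  \<comment> \<open>\<open>g\<close> is \<open>P (1 + exp (- gap))\<close> along the solution, written in terms of \<open>R\<close> so that it
    stays continuous at the blow-up time \<open>T\<close>, as the integral below requires.\<close>
  define g where "g t = P * (1 + 4 * a\<^sup>2 * R t / (4 * a\<^sup>2 * R t + (a\<^sup>2 - P\<^sup>2) * (1 - R t)\<^sup>2))" for t
  have R_pos: "0 < R t" for t
    using K by (simp add: R_def)
  have R_gt: "1 < R t" if "t \<in> fwd (ereal T)" for t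
    using riccati_ratio_gt_1[OF a _, of t K] that K by (simp add: R_def T_def fwd_ereal)
  have "4 * a\<^sup>2 * R t + (a\<^sup>2 - P\<^sup>2) * (1 - R t)\<^sup>2 \<noteq> 0" for t
    using R_pos[of t] a Pa by (intro order.strict_implies_not_eq[symmetric] add_pos_nonneg) simp_all
  moreover have "continuous_on {0..T} R"
    unfolding R_def by (intro continuous_intros)
  ultimately have g_cont: "continuous_on {0..T} g"
    unfolding g_def by (intro continuous_intros) auto
  show "regular_solution (ereal (ln K / a))
      (sum_diff_coords (\<lambda>t. S\<^sub>0 + integral {0..t} g)
        (\<lambda>t. gap_of_momentum P a (riccati_sol a K t)))
      (sum_diff_coords (\<lambda>_. P) (riccati_sol a K))"
    unfolding T_def[symmetric]
  proof (rule riccati_energy_solution[OF Pa])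
    fix t assume t: "t \<in> fwd (ereal T)"
    then have R: "K * exp (- a * t) \<noteq> 1"
      using R_gt[OF t] by (simp add: R_def)
    show "(riccati_sol a K has_real_derivative (a\<^sup>2 - (riccati_sol a K t)\<^sup>2) / 2) (at t within fwd (ereal T))"
      using riccati_sol_deriv[OF R] by (rule has_field_derivative_at_within)
    have "0 < 4 * a\<^sup>2 * (K * exp (- a * t)) / (1 - K * exp (- a * t))\<^sup>2"
      using R_gt[OF t] a by (simp add: R_def)
    then show "a\<^sup>2 < (riccati_sol a K t)\<^sup>2"
      using riccati_sol_sq_diff[OF R] by linarith
    have "g t = P * (1 + ((riccati_sol a K t)\<^sup>2 - a\<^sup>2) / ((riccati_sol a K t)\<^sup>2 - P\<^sup>2))"
      using cayley_energy(1)[OF R_pos[of t] _ Pa] R by (simp add: g_def riccati_sol_def R_def)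
    with integral_has_real_derivative_fwd[OF g_cont t]
    show "((\<lambda>t. S\<^sub>0 + integral {0..t} g) has_real_derivative
        P * (1 + ((riccati_sol a K t)\<^sup>2 - a\<^sup>2) / ((riccati_sol a K t)\<^sup>2 - P\<^sup>2))) (at t within fwd (ereal T))"
      by (auto intro!: derivative_eq_intros)
  qed
qed simp

lemma riccati_gap_tendsto:
  fixes a K P :: real
  assumes a: "0 < a" and Pa: "P\<^sup>2 < a\<^sup>2" and K: "0 < K"
  shows "((\<lambda>t. gap_of_momentum P a (riccati_sol a K t)) \<longlongrightarrow> 0)
    (at_left (ln K / a))"
proof -
  define T where "T = ln K / a"
  define R where "R t = K * exp (- a * t)" for t
  define h where "h t = ln (1 + (a\<^sup>2 - P\<^sup>2) * (1 - R t)\<^sup>2 / (4 * a\<^sup>2 * R t))" for t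
  have R_pos: "0 < R t" for t
    using K by (simp add: R_def)
  have R_T: "R T = 1"
    using a K by (simp add: R_def T_def exp_minus)
  have arg_pos: "0 < 1 + (a\<^sup>2 - P\<^sup>2) * (1 - R t)\<^sup>2 / (4 * a\<^sup>2 * R t)" for t
    using R_pos[of t] a Pa by (intro add_pos_nonneg) simp_all
  have "isCont R T"
    unfolding R_def by (intro continuous_intros)
  then have "isCont h T"
    unfolding h_def using R_pos[of T] a arg_pos[of T] by (intro continuous_intros) simp_all
  then have lim: "(h \<longlongrightarrow> 0) (at_left T)"
    using R_T by (auto simp: h_def isCont_def intro: tendsto_within_subset)
  have "eventually (\<lambda>t. t \<in> {T - 1<..<T}) (at_left T)"
    by (rule eventually_at_left_real) simp
  then have ev: "eventually (\<lambda>t. h t = gap_of_momentum P a (riccati_sol a K t))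
      (at_left T)"
  proof eventually_elim
    case (elim t)
    then have "1 < R t"
      using riccati_ratio_gt_1[OF a _ K, of t] by (simp add: T_def R_def)
    then show ?case
      using cayley_energy(2)[OF R_pos[of t] _ Pa] by (simp add: h_def riccati_sol_def R_def)
  qed
  show ?thesis
    unfolding T_def[symmetric] using lim ev by (rule Lim_transform_eventually)
qed

lemma regular_solution_riccati:
  assumes sol: "regular_solution b q p" and energy: "H (q 0) (p 0) = 1 / 2"
    and P: "(p 0 1 + p 0 2)\<^sup>2 < 1" and a: "0 < a" "a\<^sup>2 = 2 - (p 0 1 + p 0 2)\<^sup>2"
    and t: "t \<in> fwd b"
  defines "K \<equiv> (p 0 1 - p 0 2 - a) / (p 0 1 - p 0 2 + a)"
  shows "K * exp (- a * t) \<noteq> 1" and "riccati_sol a K t = p t 1 - p t 2"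
    and "q t 1 - q t 2 = gap_of_momentum (p 0 1 + p 0 2) a (riccati_sol a K t)"
proof -
  note gap = energy_level_gap[OF regular_solution_energy_level[OF sol _ energy] _ P a(2)]
  have gt: "a\<^sup>2 < (p s 1 - p s 2)\<^sup>2" if "s \<in> fwd b" for s
    using gap(1)[OF that] regular_solution_gap_pos[OF sol that] by simp
  have nz: "p s 1 - p s 2 + a \<noteq> 0" if "s \<in> fwd b" for s
  proof
    assume "p s 1 - p s 2 + a = 0"
    then have "p s 1 - p s 2 = - a"
      by simp
    then show False
      using gt[OF that] by simp
  qed
  have "(p t 1 - p t 2 - a) / (p t 1 - p t 2 + a) = K * exp (- a * t)"
    unfolding K_def
  proof (rule riccati_uniqueness[where m = "\<lambda>s. p s 1 - p s 2", OF _ _ t])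
    fix s assume s: "s \<in> fwd b"
    show "((\<lambda>s. p s 1 - p s 2) has_real_derivative (a\<^sup>2 - (p s 1 - p s 2)\<^sup>2) / 2) (at s within fwd b)"
      using regular_solution_reduced(1)[OF sol s] gap(3)[OF s] regular_solution_gap_pos[OF sol s] by simp
  qed (rule nz)
  with nz[OF t] a(1) show "K * exp (- a * t) \<noteq> 1" and m: "riccati_sol a K t = p t 1 - p t 2"
    using riccati_sol_eqI[of "p t 1 - p t 2" a K t] by auto
  show "q t 1 - q t 2 = gap_of_momentum (p 0 1 + p 0 2) a (riccati_sol a K t)"
    unfolding m using gap(2)[OF t] regular_solution_gap_pos[OF sol t] by simp
qed

lemma collision_in_finite_time:
  assumes sol: "maximal_solution b q p" and init: "q 0 2 < q 0 1" and energy: "H (q 0) (p 0) = 1 / 2"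
    and P: "\<bar>p 0 1 + p 0 2\<bar> < 1" and m: "p 0 1 - p 0 2 < 0"
  shows "b < \<infinity> \<and> ((\<lambda>t. q t 1 - q t 2) \<longlongrightarrow> 0) (at_left (real_of_ereal b))"
proof -
  have reg: "regular_solution b q p"
    using sol by (simp add: maximal_solution_def)
  define P where "P = p 0 1 + p 0 2"
  define a where "a = sqrt (2 - P\<^sup>2)"
  define K where "K = (p 0 1 - p 0 2 - a) / (p 0 1 - p 0 2 + a)"
  define T where "T = ln K / a"
  have P2: "P\<^sup>2 < 1"
    using P by (simp add: P_def abs_square_less_1)
  then have a: "0 < a" "a\<^sup>2 = 2 - P\<^sup>2" and Pa: "P\<^sup>2 < a\<^sup>2"
    by (simp_all add: a_def)
  have "P\<^sup>2 + (p 0 1 - p 0 2)\<^sup>2 + (P\<^sup>2 - (p 0 1 - p 0 2)\<^sup>2) * exp (- (q 0 1 - q 0 2)) = 2"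
    using H_sum_diff[of "q 0" "p 0"] energy init by (simp add: P_def)
  moreover have "0 < q 0 1 - q 0 2"
    using init by simp
  ultimately have gap0: "a\<^sup>2 < (p 0 1 - p 0 2)\<^sup>2" "q 0 1 - q 0 2 = gap_of_momentum P a (p 0 1 - p 0 2)"
    using energy_level_gap[OF _ _ P2 a(2)] by blast+
  note K = riccati_sol_initial[OF a(1) gap0(1) m, folded K_def]
  then have T: "0 < T"
    using a by (simp add: T_def)
  obtain S where S0: "S 0 = q 0 1 + q 0 2" and sol': "regular_solution (ereal T)
      (sum_diff_coords S (\<lambda>t. gap_of_momentum P a (riccati_sol a K t)))
      (sum_diff_coords (\<lambda>_. P) (riccati_sol a K))"
    unfolding T_def by (rule riccati_regular_solution[OF a(1) Pa K(1)])
  have "ereal T \<le> b"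
    by (rule maximal_solution_bound[OF sol sol' S0]) (use gap0(2) K(2) in \<open>simp_all add: P_def\<close>)
  note riccati = regular_solution_riccati[OF reg energy P2[unfolded P_def] a(1) a(2)[unfolded P_def],
      folded P_def K_def]
  have "T \<notin> fwd b"
    using riccati(1)[of T] K a by (auto simp: T_def exp_minus)
  with \<open>ereal T \<le> b\<close> T have b: "b = ereal T"
    by (auto simp: fwd_def not_less)
  have "eventually (\<lambda>t. t \<in> fwd b) (at_left T)"
    using eventually_at_left_real[OF T] by eventually_elim (simp add: b fwd_ereal)
  then have "eventually (\<lambda>t. gap_of_momentum P a (riccati_sol a K t) = q t 1 - q t 2) (at_left T)"
    by eventually_elim (rule riccati(3)[symmetric])
  with riccati_gap_tendsto[OF a(1) Pa, of K] K(1) have "((\<lambda>t. q t 1 - q t 2) \<longlongrightarrow> 0) (at_left T)"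
    unfolding T_def by (auto intro: Lim_transform_eventually)
  with b show ?thesis
    by simp
qed

theorem lemma3:
  fixes q p :: "real \<Rightarrow> nat \<Rightarrow> real" and b :: ereal
  assumes sol: "maximal_solution b q p"
    and init: "q 0 1 > q 0 2"
    and norm: "(p 0 1)\<^sup>2 + (p 0 2)\<^sup>2 + 2 * p 0 1 * p 0 2 * exp (- \<bar>q 0 1 - q 0 2\<bar>) = 1"
  shows "(\<bar>p 0 1 + p 0 2\<bar> < 1 \<and> p 0 1 - p 0 2 < 0 \<longrightarrow>
            b < \<infinity> \<and> ((\<lambda>t. q t 1 - q t 2) \<longlongrightarrow> 0) (at_left (real_of_ereal b)))
       \<and> (\<bar>p 0 1 + p 0 2\<bar> = 1 \<and> p 0 1 - p 0 2 < 0 \<longrightarrow>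
            b = \<infinity> \<and> ((\<lambda>t. q t 1 - q t 2) \<longlongrightarrow> 0) at_top)"
proof -
  have energy: "H (q 0) (p 0) = 1 / 2"
    using norm by (simp add: H_eq)
  show ?thesis
    using collision_in_finite_time[OF sol init energy] collision_at_infinity[OF sol init energy]
    by blast
qed

end
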